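(* There is a constant $C$ such that for every $n\ge 1$ and every non-constant symmetric total Boolean function $f:\{0,1\}^n\rightarrow\{0,1\}$ (i.e. $f(x)$ depends only on the Hamming weight $|x|$), $WUQ(f)\ge \frac{1}{2}\log n-C$.
   Context: A quantum query algorithm alternates input-independent unitaries with the oracle $O_x:|i,b,z\rangle\mapsto|i,b\oplus x_i,z\rangle$ and measures an output bit. For an algorithm whose minimum over inputs of the probability of outputting $f(x)$ is $p>1/2$, its bias is $\beta=p-1/2$ and its weakly unbounded cost is (number of queries) $+\log(1/(2\beta))$; $WUQ(f)$ is the minimum weakly unbounded cost over quantum query algorithms. $\log$ is base 2. *)

theory Defs
  imports Complex_Main "Jordan_Normal_Form.Schur_Decomposition"
begin

text \<open>Basis states |i,b,z> with i < n (query index), b < 2 (answer bit),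
  z < m (workspace) are encoded as the index i + n*(b + 2*z) in a space of
  dimension 2*n*m.\<close>

definition qdim :: "nat \<Rightarrow> nat \<Rightarrow> nat" where
  "qdim n m = 2 * n * m"

definition unitary_of_dim :: "nat \<Rightarrow> complex mat \<Rightarrow> bool" where
  "unitary_of_dim d U \<longleftrightarrow> U \<in> carrier_mat d d \<and> U * mat_adjoint U = 1\<^sub>m d"

text \<open>Query operator O_x : |i,b,z> \<mapsto> |i, b xor x_i, z>.\<close>
definition query_op :: "nat \<Rightarrow> nat \<Rightarrow> bool list \<Rightarrow> complex mat" where
  "query_op n m x = mat (qdim n m) (qdim n m) (\<lambda>(r, c).
     let i = c mod n; b = (c div n) mod 2; z = c div (2 * n);
         b' = (if x ! i then 1 - b else b)
     in if r = i + n * (b' + 2 * z) then 1 else 0)"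

text \<open>An algorithm is given by a workspace size m and the list of unitaries
  [U_0, ..., U_T]; it computes U_T O_x ... O_x U_1 O_x U_0 |0>.\<close>
fun final_state :: "nat \<Rightarrow> nat \<Rightarrow> complex mat list \<Rightarrow> bool list \<Rightarrow> complex vec" where
  "final_state n m [] x = unit_vec (qdim n m) 0"
| "final_state n m (U # Us) x =
     foldl (\<lambda>v V. V *\<^sub>v (query_op n m x *\<^sub>v v)) (U *\<^sub>v unit_vec (qdim n m) 0) Us"

definition num_queries :: "complex mat list \<Rightarrow> nat" where
  "num_queries Us = length Us - 1"

definition valid_alg :: "nat \<Rightarrow> nat \<Rightarrow> complex mat list \<Rightarrow> bool" where
  "valid_alg n m Us \<longleftrightarrow> m \<ge> 1 \<and> Us \<noteq> [] \<and> (\<forall>U\<in>set Us. unitary_of_dim (qdim n m) U)"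

definition prob_output :: "nat \<Rightarrow> nat \<Rightarrow> complex mat list \<Rightarrow> bool list \<Rightarrow> bool \<Rightarrow> real" where
  "prob_output n m Us x c =
     (\<Sum>r<qdim n m. if ((r div n) mod 2 = 1) = c
                      then (cmod (final_state n m Us x $ r))\<^sup>2 else 0)"

definition inputs :: "nat \<Rightarrow> bool list set" where
  "inputs n = {x. length x = n}"

definition hamming_weight :: "bool list \<Rightarrow> nat" where
  "hamming_weight x = length (filter id x)"

definition success_prob :: "nat \<Rightarrow> (bool list \<Rightarrow> bool) \<Rightarrow> nat \<Rightarrow> complex mat list \<Rightarrow> real" where
  "success_prob n f m Us = Min ((\<lambda>x. prob_output n m Us x (f x)) ` inputs n)"

definition bias :: "nat \<Rightarrow> (bool list \<Rightarrow> bool) \<Rightarrow> nat \<Rightarrow> complex mat list \<Rightarrow> real" where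
  "bias n f m Us = success_prob n f m Us - 1/2"

definition wu_cost :: "nat \<Rightarrow> (bool list \<Rightarrow> bool) \<Rightarrow> nat \<Rightarrow> complex mat list \<Rightarrow> real" where
  "wu_cost n f m Us = real (num_queries Us) + log 2 (1 / (2 * bias n f m Us))"

definition WUQ :: "nat \<Rightarrow> (bool list \<Rightarrow> bool) \<Rightarrow> real" where
  "WUQ n f = Inf {wu_cost n f m Us | m Us. valid_alg n m Us \<and> bias n f m Us > 0}"

definition symmetric_fun :: "nat \<Rightarrow> (bool list \<Rightarrow> bool) \<Rightarrow> bool" where
  "symmetric_fun n f \<longleftrightarrow> (\<forall>x\<in>inputs n. \<forall>y\<in>inputs n.
      hamming_weight x = hamming_weight y \<longrightarrow> f x = f y)"

definition nonconstant_fun :: "nat \<Rightarrow> (bool list \<Rightarrow> bool) \<Rightarrow> bool" where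
  "nonconstant_fun n f \<longleftrightarrow> (\<exists>x\<in>inputs n. \<exists>y\<in>inputs n. f x \<noteq> f y)"

end

theory Submission
  imports Defs "HOL-Analysis.L2_Norm"
begin

text \<open>
  A nonconstant symmetric function changes value between some weights \<open>k\<close> and \<open>k + 1\<close>, so it
  has an input \<open>y\<close> with a set \<open>S\<close> of at least \<open>n / 2\<close> sensitive bits. Let an algorithm make
  \<open>T\<close> queries with bias \<open>\<beta>\<close>. Since it separates \<open>f y\<close> from \<open>f y\<^sup>i\<close> (\<open>y\<close> with bit \<open>i\<close> flipped), the
  final states on \<open>y\<close> and \<open>y\<^sup>i\<close> are at distance at least \<open>\<beta>\<close>; by the hybrid argument this
  distance is at most \<open>2 \<Sum>\<^sub>t \<parallel>P\<^sub>i \<psi>\<^sub>t\<parallel>\<close>, where \<open>\<psi>\<^sub>t\<close> is the state on \<open>y\<close> before query \<open>t\<close> and \<open>P\<^sub>i\<close>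
  projects onto queries to \<open>i\<close>. Summing over \<open>i \<in> S\<close> and using Cauchy--Schwarz,
  \<open>\<Sum>\<^sub>i\<^sub>\<in>\<^sub>S \<parallel>P\<^sub>i \<psi>\<^sub>t\<parallel> \<le> \<surd>|S|\<close>, gives \<open>\<beta> \<surd>(n/2) \<le> 2T\<close>, hence
  \<open>T + log (1/(2\<beta>)) \<ge> \<onehalf> log n - 3\<close> because \<open>log T \<le> T\<close>. As \<open>WUQ\<close> is an infimum, a witness is
  also needed: a reversible counting algorithm computes every symmetric function exactly.
\<close>

definition basis_index :: "nat \<Rightarrow> nat \<Rightarrow> nat \<Rightarrow> nat \<Rightarrow> nat" where
  "basis_index n i b z = i + n * (b + 2 * z)"

lemma basis_index_decomp: "basis_index n (c mod n) (c div n mod 2) (c div (2 * n)) = c"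
proof -
  have "c div n = c div n mod 2 + 2 * (c div (2 * n))"
    by (simp add: div_mult2_eq mult.commute)
  then show ?thesis unfolding basis_index_def by (metis mod_mult_div_eq)
qed

lemma basis_index_coords:
  assumes "i < n" and "b < 2"
  shows "basis_index n i b z mod n = i"
    and "basis_index n i b z div n mod 2 = b"
    and "basis_index n i b z div (2 * n) = z"
proof -
  have div_n: "basis_index n i b z div n = b + 2 * z"
    using assms unfolding basis_index_def by simp
  show "basis_index n i b z mod n = i" using assms unfolding basis_index_def by simp
  show "basis_index n i b z div n mod 2 = b" using div_n assms by simp
  have "basis_index n i b z div (2 * n) = basis_index n i b z div n div 2"
    by (metis div_mult2_eq mult.commute)
  then show "basis_index n i b z div (2 * n) = z" using div_n assms by simp
qed

lemma basis_index_less_qdim: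
  assumes "i < n" and "b < 2" and "z < m"
  shows "basis_index n i b z < qdim n m"
proof -
  have "basis_index n i b z < n + n * (1 + 2 * z)"
    unfolding basis_index_def using assms by (intro add_less_le_mono mult_le_mono) auto
  also have "\<dots> = n * (2 * (z + 1))" by (simp add: algebra_simps)
  also have "\<dots> \<le> n * (2 * m)" using assms by (intro mult_le_mono) auto
  finally show ?thesis unfolding qdim_def by (simp add: mult.assoc)
qed

lemma workspace_less: "c < qdim n m \<Longrightarrow> c div (2 * n) < m"
  unfolding qdim_def by (simp add: less_mult_imp_div_less mult.commute)

definition query_perm :: "nat \<Rightarrow> bool list \<Rightarrow> nat \<Rightarrow> nat" where
  "query_perm n x c = basis_index n (c mod n)
     (if x ! (c mod n) then 1 - c div n mod 2 else c div n mod 2) (c div (2 * n))"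

lemma query_perm_basis_index:
  assumes "i < n" and "b < 2"
  shows "query_perm n x (basis_index n i b z) = basis_index n i (if x ! i then 1 - b else b) z"
  using basis_index_coords[OF assms] unfolding query_perm_def by simp

lemma query_perm_mod: "0 < n \<Longrightarrow> query_perm n x c mod n = c mod n"
  unfolding query_perm_def by (rule basis_index_coords) auto

lemma query_perm_involution: "0 < n \<Longrightarrow> query_perm n x (query_perm n x c) = c"
  unfolding query_perm_def[of n x c]
  by (subst query_perm_basis_index) (auto simp: basis_index_decomp)

lemma query_perm_less: "0 < n \<Longrightarrow> c < qdim n m \<Longrightarrow> query_perm n x c < qdim n m"
  unfolding query_perm_def by (intro basis_index_less_qdim workspace_less) auto

section \<open>Permutation matrices and unitarity\<close>

definition perm_mat :: "nat \<Rightarrow> (nat \<Rightarrow> nat) \<Rightarrow> complex mat" where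
  "perm_mat d \<sigma> = mat d d (\<lambda>(r, c). if r = \<sigma> c then 1 else 0)"

lemma query_op_eq_perm_mat: "query_op n m x = perm_mat (qdim n m) (query_perm n x)"
  unfolding query_op_def perm_mat_def query_perm_def basis_index_def Let_def by simp

lemma perm_mat_mult_vec_nth:
  assumes inv: "\<And>c. c < d \<Longrightarrow> \<tau> (\<sigma> c) = c" "\<And>r. r < d \<Longrightarrow> \<sigma> (\<tau> r) = r"
    and "\<And>r. r < d \<Longrightarrow> \<tau> r < d"
    and v: "v \<in> carrier_vec d" and r: "r < d"
  shows "(perm_mat d \<sigma> *\<^sub>v v) $ r = v $ \<tau> r"
proof -
  have "(perm_mat d \<sigma> *\<^sub>v v) $ r = (\<Sum>c<d. (if r = \<sigma> c then 1 else 0) * v $ c)"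
    using v r unfolding perm_mat_def by (simp add: scalar_prod_def lessThan_atLeast0)
  also have "\<dots> = (\<Sum>c<d. if c = \<tau> r then v $ c else 0)"
    using inv by (intro sum.cong) (auto simp: r)
  finally show ?thesis using assms by simp
qed

lemma perm_mat_mult_unit_vec:
  assumes "j < d" and "\<sigma> j < d"
  shows "perm_mat d \<sigma> *\<^sub>v unit_vec d j = unit_vec d (\<sigma> j)"
proof (rule eq_vecI)
  fix r assume "r < dim_vec (unit_vec d (\<sigma> j))"
  then have r: "r < d" by simp
  have "(perm_mat d \<sigma> *\<^sub>v unit_vec d j) $ r = (\<Sum>c<d. (if r = \<sigma> c then 1 else 0) * unit_vec d j $ c)"
    using r unfolding perm_mat_def by (simp add: scalar_prod_def lessThan_atLeast0)
  also have "\<dots> = (\<Sum>c<d. if c = j then (if r = \<sigma> j then 1 else 0) else 0)"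
    by (intro sum.cong) (auto simp: unit_vec_def)
  finally show "(perm_mat d \<sigma> *\<^sub>v unit_vec d j) $ r = unit_vec d (\<sigma> j) $ r"
    using assms r by (simp add: unit_vec_def)
qed (simp add: perm_mat_def)

lemma mat_adjoint_nth:
  assumes "U \<in> carrier_mat d d" and "i < d" and "j < d"
  shows "mat_adjoint U $$ (i, j) = cnj (U $$ (j, i))"
  using assms unfolding mat_adjoint_def mat_of_rows_def by auto

lemma unitary_perm_mat:
  assumes bij: "bij_betw \<sigma> {..<d} {..<d}"
  shows "unitary_of_dim d (perm_mat d \<sigma>)"
proof -
  let ?P = "perm_mat d \<sigma>"
  have P: "?P \<in> carrier_mat d d" unfolding perm_mat_def by simp
  have "?P * mat_adjoint ?P = 1\<^sub>m d"
  proof (rule eq_matI)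
    fix r s assume "r < dim_row (1\<^sub>m d :: complex mat)" and "s < dim_col (1\<^sub>m d :: complex mat)"
    then have r: "r < d" and s: "s < d" by auto
    have "(?P * mat_adjoint ?P) $$ (r, s) = (\<Sum>c<d. ?P $$ (r, c) * mat_adjoint ?P $$ (c, s))"
      using P r s by (simp add: mat_adjoint_def scalar_prod_def lessThan_atLeast0)
    also have "\<dots> = (\<Sum>c<d. (\<lambda>u. if r = u \<and> s = u then 1 else 0) (\<sigma> c))"
      using mat_adjoint_nth[OF P] r s unfolding perm_mat_def by (intro sum.cong) auto
    also have "\<dots> = (\<Sum>u<d. if r = u \<and> s = u then 1 else 0)"
      by (rule sum.reindex_bij_betw[OF bij])
    also have "\<dots> = 1\<^sub>m d $$ (r, s)"
      using r s by (simp add: conj_commute eq_commute[of r])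
    finally show "(?P * mat_adjoint ?P) $$ (r, s) = 1\<^sub>m d $$ (r, s)" .
  qed (use P in \<open>auto simp: mat_adjoint_def\<close>)
  then show ?thesis unfolding unitary_of_dim_def using P by simp
qed

lemma unitary_query_op:
  assumes "0 < n"
  shows "unitary_of_dim (qdim n m) (query_op n m x)"
  unfolding query_op_eq_perm_mat
  by (intro unitary_perm_mat bij_betw_byWitness[where f' = "query_perm n x"])
    (auto simp: assms query_perm_involution query_perm_less)

lemma query_op_carrier: "query_op n m x \<in> carrier_mat (qdim n m) (qdim n m)"
  unfolding query_op_def by simp

lemma query_op_mult_vec_nth:
  assumes "0 < n" and "v \<in> carrier_vec (qdim n m)" and "r < qdim n m"
  shows "(query_op n m x *\<^sub>v v) $ r = v $ query_perm n x r"
  unfolding query_op_eq_perm_mat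
  by (rule perm_mat_mult_vec_nth) (use assms in \<open>auto simp: query_perm_involution query_perm_less\<close>)

definition sq_norm :: "complex vec \<Rightarrow> real" where
  "sq_norm v = (\<Sum>r<dim_vec v. (cmod (v $ r))\<^sup>2)"

definition vec_dist :: "nat \<Rightarrow> complex vec \<Rightarrow> complex vec \<Rightarrow> real" where
  "vec_dist d v w = L2_set (\<lambda>r. cmod (v $ r - w $ r)) {..<d}"

lemma unitary_mult_adjoint_left:
  assumes "unitary_of_dim d U" and "l < d" and "j < d"
  shows "(\<Sum>r<d. cnj (U $$ (r, l)) * U $$ (r, j)) = (if l = j then 1 else 0)"
proof -
  have U: "U \<in> carrier_mat d d" and UA: "U * mat_adjoint U = 1\<^sub>m d"
    using assms(1) unfolding unitary_of_dim_def by auto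
  have A: "mat_adjoint U \<in> carrier_mat d d" using U unfolding mat_adjoint_def by auto
  have "mat_adjoint U * U = 1\<^sub>m d" by (rule mat_mult_left_right_inverse[OF U A UA])
  moreover have "(mat_adjoint U * U) $$ (l, j) = (\<Sum>r<d. cnj (U $$ (r, l)) * U $$ (r, j))"
    using U A assms(2,3) mat_adjoint_nth[OF U] by (simp add: scalar_prod_def lessThan_atLeast0)
  ultimately show ?thesis using assms(2,3) by simp
qed

lemma complex_of_sq_norm:
  "complex_of_real (sq_norm v) = (\<Sum>r<dim_vec v. v $ r * cnj (v $ r))"
  by (simp only: sq_norm_def of_real_sum complex_norm_square)

lemma unitary_sq_norm:
  assumes U: "unitary_of_dim d U" and v: "v \<in> carrier_vec d"
  shows "sq_norm (U *\<^sub>v v) = sq_norm v"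
proof -
  have UC: "U \<in> carrier_mat d d" using U unfolding unitary_of_dim_def by auto
  have entry: "(U *\<^sub>v v) $ r = (\<Sum>j<d. U $$ (r, j) * v $ j)" if "r < d" for r
    using UC v that by (simp add: scalar_prod_def lessThan_atLeast0)
  have "complex_of_real (sq_norm (U *\<^sub>v v)) = (\<Sum>r<d. (U *\<^sub>v v) $ r * cnj ((U *\<^sub>v v) $ r))"
    using UC by (simp only: complex_of_sq_norm dim_mult_mat_vec carrier_matD)
  also have "\<dots> = (\<Sum>r<d. (\<Sum>j<d. U $$ (r, j) * v $ j) * (\<Sum>l<d. cnj (U $$ (r, l)) * cnj (v $ l)))"
    by (simp add: entry)
  also have "\<dots> = (\<Sum>r<d. \<Sum>j<d. \<Sum>l<d. v $ j * cnj (v $ l) * (cnj (U $$ (r, l)) * U $$ (r, j)))"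
    by (intro sum.cong refl) (simp add: sum_product mult_ac)
  also have "\<dots> = (\<Sum>j<d. \<Sum>l<d. \<Sum>r<d. v $ j * cnj (v $ l) * (cnj (U $$ (r, l)) * U $$ (r, j)))"
    by (subst sum.swap) (rule sum.cong[OF refl], rule sum.swap)
  also have "\<dots> = (\<Sum>j<d. \<Sum>l<d. v $ j * cnj (v $ l) * (\<Sum>r<d. cnj (U $$ (r, l)) * U $$ (r, j)))"
    by (simp only: sum_distrib_left)
  also have "\<dots> = (\<Sum>j<d. v $ j * cnj (v $ j))"
    by (simp add: unitary_mult_adjoint_left[OF U] if_distrib cong: if_cong)
  also have "\<dots> = complex_of_real (sq_norm v)"
    using v by (simp add: complex_of_sq_norm)
  finally show ?thesis by (simp only: of_real_eq_iff)
qed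

lemma vec_dist_eq_sqrt_sq_norm:
  assumes "v \<in> carrier_vec d" and "w \<in> carrier_vec d"
  shows "vec_dist d v w = sqrt (sq_norm (v - w))"
  using assms unfolding vec_dist_def sq_norm_def L2_set_def by auto

lemma unitary_vec_dist:
  assumes U: "unitary_of_dim d U" and v: "v \<in> carrier_vec d" and w: "w \<in> carrier_vec d"
  shows "vec_dist d (U *\<^sub>v v) (U *\<^sub>v w) = vec_dist d v w"
proof -
  have UC: "U \<in> carrier_mat d d" using U unfolding unitary_of_dim_def by auto
  have "U *\<^sub>v v - U *\<^sub>v w = U *\<^sub>v (v - w)" using mult_minus_distrib_mat_vec[OF UC v w] by simp
  then show ?thesis
    using vec_dist_eq_sqrt_sq_norm[OF v w] vec_dist_eq_sqrt_sq_norm[of "U *\<^sub>v v" d "U *\<^sub>v w"]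
      UC v w unitary_sq_norm[OF U, of "v - w"] by auto
qed

lemma sq_norm_unit_vec: "j < d \<Longrightarrow> sq_norm (unit_vec d j) = 1"
proof -
  have "sq_norm (unit_vec d j) = (\<Sum>r<d. if r = j then 1 else 0)"
    unfolding sq_norm_def by (intro sum.cong) (auto simp: unit_vec_def)
  then show "j < d \<Longrightarrow> sq_norm (unit_vec d j) = 1" by simp
qed

section \<open>The hybrid argument\<close>

definition query_mag :: "nat \<Rightarrow> nat \<Rightarrow> nat \<Rightarrow> complex vec \<Rightarrow> real" where
  "query_mag n d i w = L2_set (\<lambda>r. if r mod n = i then cmod (w $ r) else 0) {..<d}"

lemma L2_set_reindex_involution:
  assumes "\<And>r. r < d \<Longrightarrow> \<sigma> (\<sigma> r) = r" and "\<And>r. r < d \<Longrightarrow> \<sigma> r < d"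
  shows "L2_set (\<lambda>r. g (\<sigma> r)) {..<d} = L2_set g {..<d}"
  unfolding L2_set_def
  by (rule arg_cong[where f = sqrt], rule sum.reindex_bij_witness[of _ \<sigma> \<sigma>]) (use assms in auto)

lemma query_mag_reindex:
  assumes "0 < n"
  shows "L2_set (\<lambda>r. if r mod n = i then cmod (w $ query_perm n x r) else 0) {..<qdim n m}
    = query_mag n (qdim n m) i w"
  unfolding query_mag_def
  using L2_set_reindex_involution[of "qdim n m" "query_perm n x"
      "\<lambda>r. if r mod n = i then cmod (w $ r) else 0"]
  by (simp add: assms query_perm_involution query_perm_less query_perm_mod)

lemma query_vec_dist_le:
  assumes n: "0 < n" and xy: "\<And>j. j < n \<Longrightarrow> j \<noteq> i \<Longrightarrow> x ! j = y ! j"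
    and v: "v \<in> carrier_vec (qdim n m)" and w: "w \<in> carrier_vec (qdim n m)"
  shows "vec_dist (qdim n m) (query_op n m x *\<^sub>v v) (query_op n m y *\<^sub>v w)
         \<le> vec_dist (qdim n m) v w + 2 * query_mag n (qdim n m) i w"
proof -
  let ?d = "qdim n m" and ?sx = "query_perm n x" and ?sy = "query_perm n y"
  define a where "a r = cmod (v $ ?sx r - w $ ?sx r)" for r
  define b where "b r = (if r mod n = i then cmod (w $ ?sx r) else 0)" for r
  define c where "c r = (if r mod n = i then cmod (w $ ?sy r) else 0)" for r
  have pointwise: "cmod ((query_op n m x *\<^sub>v v) $ r - (query_op n m y *\<^sub>v w) $ r) \<le> a r + b r + c r"
    if r: "r < ?d" for r
  proof (cases "r mod n = i")
    case False
    then have "?sx r = ?sy r" using xy[of "r mod n"] n unfolding query_perm_def by auto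
    then show ?thesis
      using False r query_op_mult_vec_nth[OF n v] query_op_mult_vec_nth[OF n w]
      unfolding a_def b_def c_def by simp
  next
    case True
    have "cmod (v $ ?sx r - w $ ?sy r) \<le> cmod (v $ ?sx r - w $ ?sx r) + cmod (w $ ?sx r - w $ ?sy r)"
      using norm_triangle_ineq[of "v $ ?sx r - w $ ?sx r" "w $ ?sx r - w $ ?sy r"] by simp
    also have "cmod (w $ ?sx r - w $ ?sy r) \<le> cmod (w $ ?sx r) + cmod (w $ ?sy r)"
      by (rule norm_triangle_ineq4)
    finally show ?thesis
      using True r query_op_mult_vec_nth[OF n v] query_op_mult_vec_nth[OF n w]
      unfolding a_def b_def c_def by simp
  qed
  have "vec_dist ?d (query_op n m x *\<^sub>v v) (query_op n m y *\<^sub>v w) \<le> L2_set (\<lambda>r. a r + b r + c r) {..<?d}"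
    unfolding vec_dist_def by (rule L2_set_mono) (use pointwise in auto)
  also have "\<dots> \<le> L2_set a {..<?d} + L2_set b {..<?d} + L2_set c {..<?d}"
    using L2_set_triangle_ineq[of "\<lambda>r. a r + b r" c "{..<?d}"] L2_set_triangle_ineq[of a b "{..<?d}"]
    by linarith
  also have "L2_set a {..<?d} = vec_dist ?d v w"
    unfolding a_def vec_dist_def
    by (rule L2_set_reindex_involution[where g = "\<lambda>r. cmod (v $ r - w $ r)"])
      (auto simp: n query_perm_involution query_perm_less)
  also have "L2_set b {..<?d} = query_mag n ?d i w"
    unfolding b_def by (rule query_mag_reindex[OF n])
  also have "L2_set c {..<?d} = query_mag n ?d i w"
    unfolding c_def by (rule query_mag_reindex[OF n])
  finally show ?thesis by simp
qed

definition alg_step :: "nat \<Rightarrow> nat \<Rightarrow> bool list \<Rightarrow> complex vec \<Rightarrow> complex mat \<Rightarrow> complex vec" where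
  "alg_step n m x v V = V *\<^sub>v (query_op n m x *\<^sub>v v)"

lemma final_state_Cons:
  "final_state n m (U # Us) x = foldl (alg_step n m x) (U *\<^sub>v unit_vec (qdim n m) 0) Us"
  unfolding alg_step_def by simp

lemma alg_step_carrier_sq_norm:
  assumes "0 < n" and "unitary_of_dim (qdim n m) V" and "v \<in> carrier_vec (qdim n m)"
  shows "alg_step n m x v V \<in> carrier_vec (qdim n m)" and "sq_norm (alg_step n m x v V) = sq_norm v"
proof -
  have Q: "unitary_of_dim (qdim n m) (query_op n m x)" by (rule unitary_query_op[OF assms(1)])
  have carrier: "U \<in> carrier_mat (qdim n m) (qdim n m)" if "unitary_of_dim (qdim n m) U" for U
    using that unfolding unitary_of_dim_def by simp
  have Qv: "query_op n m x *\<^sub>v v \<in> carrier_vec (qdim n m)"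
    using assms(3) by (rule mult_mat_vec_carrier[OF query_op_carrier])
  show "alg_step n m x v V \<in> carrier_vec (qdim n m)"
    unfolding alg_step_def using carrier[OF assms(2)] Qv by simp
  show "sq_norm (alg_step n m x v V) = sq_norm v"
    unfolding alg_step_def unitary_sq_norm[OF assms(2) Qv] unitary_sq_norm[OF Q assms(3)] ..
qed

lemma foldl_alg_step_carrier_sq_norm:
  assumes "0 < n" and "\<forall>V\<in>set Vs. unitary_of_dim (qdim n m) V" and "v \<in> carrier_vec (qdim n m)"
  shows "foldl (alg_step n m x) v Vs \<in> carrier_vec (qdim n m)
    \<and> sq_norm (foldl (alg_step n m x) v Vs) = sq_norm v"
  using assms(2,3) by (induction Vs arbitrary: v) (auto simp: alg_step_carrier_sq_norm[OF assms(1)])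

lemma hybrid_bound:
  assumes n: "0 < n" and xy: "\<And>j. j < n \<Longrightarrow> j \<noteq> i \<Longrightarrow> x ! j = y ! j"
    and Vs: "\<forall>V\<in>set Vs. unitary_of_dim (qdim n m) V"
    and v: "v \<in> carrier_vec (qdim n m)" and w: "w \<in> carrier_vec (qdim n m)"
  shows "vec_dist (qdim n m) (foldl (alg_step n m x) v Vs) (foldl (alg_step n m y) w Vs)
         \<le> vec_dist (qdim n m) v w
           + 2 * (\<Sum>t<length Vs. query_mag n (qdim n m) i (foldl (alg_step n m y) w (take t Vs)))"
  using Vs v w
proof (induction Vs arbitrary: v w)
  case Nil
  then show ?case by simp
next
  case (Cons V Vs)
  let ?d = "qdim n m"
  have V: "unitary_of_dim ?d V" using Cons.prems by simp
  have qv: "query_op n m x *\<^sub>v v \<in> carrier_vec ?d" and qw: "query_op n m y *\<^sub>v w \<in> carrier_vec ?d"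
    using Cons.prems(2,3) by (auto intro: mult_mat_vec_carrier[OF query_op_carrier])
  have step: "vec_dist ?d (alg_step n m x v V) (alg_step n m y w V) \<le> vec_dist ?d v w + 2 * query_mag n ?d i w"
    unfolding alg_step_def unitary_vec_dist[OF V qv qw]
    by (rule query_vec_dist_le[OF n xy Cons.prems(2,3)])
  have "(\<Sum>t<length (V # Vs). query_mag n ?d i (foldl (alg_step n m y) w (take t (V # Vs))))
      = query_mag n ?d i w
        + (\<Sum>t<length Vs. query_mag n ?d i (foldl (alg_step n m y) (alg_step n m y w V) (take t Vs)))"
    by (simp only: length_Cons sum.lessThan_Suc_shift) simp
  then show ?case
    using Cons.IH[of "alg_step n m x v V" "alg_step n m y w V"] step Cons.prems
      alg_step_carrier_sq_norm(1)[OF n V] by simp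
qed

lemma sum_query_mag_le:
  assumes S: "finite S" and w: "w \<in> carrier_vec d"
  shows "(\<Sum>i\<in>S. query_mag n d i w) \<le> sqrt (card S) * sqrt (sq_norm w)"
proof -
  have "(\<Sum>i\<in>S. query_mag n d i w) \<le> L2_set (\<lambda>i. query_mag n d i w) S * L2_set (\<lambda>i. 1) S"
    using L2_set_mult_ineq[of "\<lambda>i. query_mag n d i w" "\<lambda>i. 1" S] unfolding query_mag_def by simp
  moreover have "L2_set (\<lambda>i. 1::real) S = sqrt (card S)" by (simp add: L2_set_constant)
  moreover have "L2_set (\<lambda>i. query_mag n d i w) S \<le> sqrt (sq_norm w)"
  proof -
    have sq: "(query_mag n d i w)\<^sup>2 = (\<Sum>r<d. if r mod n = i then (cmod (w $ r))\<^sup>2 else 0)" for i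
      unfolding query_mag_def L2_set_def by (subst real_sqrt_pow2) (auto intro!: sum_nonneg sum.cong)
    have "(\<Sum>i\<in>S. (query_mag n d i w)\<^sup>2) = (\<Sum>r<d. \<Sum>i\<in>S. if r mod n = i then (cmod (w $ r))\<^sup>2 else 0)"
      unfolding sq by (rule sum.swap)
    also have "\<dots> = (\<Sum>r<d. if r mod n \<in> S then (cmod (w $ r))\<^sup>2 else 0)"
      using S by simp
    also have "\<dots> \<le> sq_norm w" using w unfolding sq_norm_def by (auto intro: sum_mono)
    finally show ?thesis unfolding L2_set_def by (rule real_sqrt_le_mono)
  qed
  ultimately show ?thesis
    using mult_right_mono[of "L2_set (\<lambda>i. query_mag n d i w) S" "sqrt (sq_norm w)" "sqrt (card S)"]
    by (simp add: mult.commute)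
qed

lemma valid_alg_ConsE:
  assumes "valid_alg n m Us"
  obtains U Us' where "Us = U # Us'"
    and "unitary_of_dim (qdim n m) U" and "\<forall>V\<in>set Us'. unitary_of_dim (qdim n m) V"
  using assms unfolding valid_alg_def by (cases Us) auto

lemma initial_state_carrier_sq_norm:
  assumes "0 < n" and "valid_alg n m (U # Us')"
  shows "U *\<^sub>v unit_vec (qdim n m) 0 \<in> carrier_vec (qdim n m)"
    and "sq_norm (U *\<^sub>v unit_vec (qdim n m) 0) = 1"
proof -
  have U: "unitary_of_dim (qdim n m) U" and d: "0 < qdim n m"
    using assms unfolding valid_alg_def qdim_def by auto
  show "U *\<^sub>v unit_vec (qdim n m) 0 \<in> carrier_vec (qdim n m)"
    using U unfolding unitary_of_dim_def by auto
  show "sq_norm (U *\<^sub>v unit_vec (qdim n m) 0) = 1"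
    using unitary_sq_norm[OF U] sq_norm_unit_vec[OF d] by simp
qed

lemma final_state_carrier_sq_norm:
  assumes n: "0 < n" and va: "valid_alg n m Us"
  shows "final_state n m Us x \<in> carrier_vec (qdim n m) \<and> sq_norm (final_state n m Us x) = 1"
proof -
  obtain U Us' where Us: "Us = U # Us'" and "\<forall>V\<in>set Us'. unitary_of_dim (qdim n m) V"
    using va by (rule valid_alg_ConsE)
  then show ?thesis
    using foldl_alg_step_carrier_sq_norm initial_state_carrier_sq_norm[OF n va[unfolded Us]] n
    unfolding Us final_state_Cons by metis
qed

lemma sq_norm_restrict_diff_le:
  assumes a: "a \<in> carrier_vec d" and b: "b \<in> carrier_vec d"
    and "sq_norm a = 1" and "sq_norm b = 1" and R: "R \<subseteq> {..<d}"
  shows "(\<Sum>r\<in>R. (cmod (a $ r))\<^sup>2) - (\<Sum>r\<in>R. (cmod (b $ r))\<^sup>2) \<le> 2 * vec_dist d a b"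
proof -
  have fin: "finite R" using R finite_subset by blast
  let ?A = "L2_set (\<lambda>r. cmod (a $ r)) R" and ?B = "L2_set (\<lambda>r. cmod (b $ r)) R"
  have sq: "(\<Sum>r\<in>R. (cmod (u $ r))\<^sup>2) = (L2_set (\<lambda>r. cmod (u $ r)) R)\<^sup>2" for u
    unfolding L2_set_def by (simp add: sum_nonneg)
  have le1: "L2_set (\<lambda>r. cmod (u $ r)) R \<le> 1" if "u \<in> carrier_vec d" "sq_norm u = 1" for u
  proof -
    have "L2_set (\<lambda>r. cmod (u $ r)) R \<le> L2_set (\<lambda>r. cmod (u $ r)) {..<d}"
      unfolding L2_set_def by (intro real_sqrt_le_mono sum_mono2) (use R in auto)
    also have "\<dots> = 1" using that unfolding L2_set_def sq_norm_def by simp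
    finally show ?thesis .
  qed
  have "cmod (a $ r) \<le> cmod (a $ r - b $ r) + cmod (b $ r)" for r
    using norm_triangle_sub[of "a $ r" "b $ r"] by linarith
  then have "?A \<le> L2_set (\<lambda>r. cmod (a $ r - b $ r) + cmod (b $ r)) R"
    by (intro L2_set_mono) auto
  also have "\<dots> \<le> L2_set (\<lambda>r. cmod (a $ r - b $ r)) R + ?B" by (rule L2_set_triangle_ineq)
  also have "L2_set (\<lambda>r. cmod (a $ r - b $ r)) R \<le> vec_dist d a b"
    unfolding vec_dist_def L2_set_def by (intro real_sqrt_le_mono sum_mono2) (use R in auto)
  finally have "?A - ?B \<le> vec_dist d a b" by simp
  moreover have "?A \<le> 1" "?B \<le> 1" "0 \<le> ?B" "0 \<le> vec_dist d a b"
    using le1 assms unfolding vec_dist_def by auto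
  ultimately have "?A\<^sup>2 - ?B\<^sup>2 \<le> 2 * vec_dist d a b"
  proof (cases "?A \<le> ?B")
    case True
    then have "?A\<^sup>2 \<le> ?B\<^sup>2" by (intro power_mono) auto
    then show ?thesis using \<open>0 \<le> vec_dist d a b\<close> by linarith
  next
    case False
    have "?A\<^sup>2 - ?B\<^sup>2 = (?A - ?B) * (?A + ?B)" by (simp add: power2_eq_square algebra_simps)
    also have "\<dots> \<le> vec_dist d a b * 2"
      using False \<open>?A - ?B \<le> vec_dist d a b\<close> \<open>?A \<le> 1\<close> \<open>?B \<le> 1\<close> by (intro mult_mono) auto
    finally show ?thesis by simp
  qed
  then show ?thesis unfolding sq .
qed

lemma prob_output_eq:
  "prob_output n m Us x c
     = (\<Sum>r\<in>{r\<in>{..<qdim n m}. ((r div n) mod 2 = 1) = c}. (cmod (final_state n m Us x $ r))\<^sup>2)"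
  unfolding prob_output_def by (rule sum.inter_filter[symmetric]) simp

lemma prob_output_complement:
  assumes "final_state n m Us x \<in> carrier_vec (qdim n m)" and "sq_norm (final_state n m Us x) = 1"
  shows "prob_output n m Us x (\<not> c) = 1 - prob_output n m Us x c"
proof -
  have "prob_output n m Us x (\<not> c) + prob_output n m Us x c = sq_norm (final_state n m Us x)"
    using assms(1) unfolding prob_output_def sq_norm_def sum.distrib[symmetric]
    by (intro sum.cong) auto
  then show ?thesis using assms(2) by simp
qed

lemma finite_inputs: "finite (inputs n)"
  unfolding inputs_def using finite_lists_length_eq[of "UNIV :: bool set" n] by simp

lemma success_prob_le:
  "x \<in> inputs n \<Longrightarrow> success_prob n f m Us \<le> prob_output n m Us x (f x)"
  unfolding success_prob_def using finite_inputs by (intro Min_le) auto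

lemma bias_le_query_mag:
  assumes n: "0 < n" and va: "valid_alg n m Us" and Us: "Us = U # Us'"
    and x: "x \<in> inputs n" and y: "y \<in> inputs n" and fxy: "f x \<noteq> f y"
    and xy: "\<And>j. j < n \<Longrightarrow> j \<noteq> i \<Longrightarrow> x ! j = y ! j"
  shows "bias n f m Us \<le> 2 * (\<Sum>t<length Us'.
           query_mag n (qdim n m) i (foldl (alg_step n m y) (U *\<^sub>v unit_vec (qdim n m) 0) (take t Us')))"
proof -
  let ?d = "qdim n m" and ?v = "U *\<^sub>v unit_vec (qdim n m) 0"
  have Vs: "\<forall>V\<in>set Us'. unitary_of_dim ?d V"
    using va unfolding valid_alg_def Us by auto
  note v = initial_state_carrier_sq_norm(1)[OF n va[unfolded Us]]
  have fin: "final_state n m Us z \<in> carrier_vec ?d \<and> sq_norm (final_state n m Us z) = 1" for z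
    by (rule final_state_carrier_sq_norm[OF n va])
  have "prob_output n m Us y (f x) = 1 - prob_output n m Us y (f y)"
    using prob_output_complement[of n m Us y "f y"] fin[of y] fxy by (cases "f x") auto
  then have "2 * bias n f m Us \<le> prob_output n m Us x (f x) - prob_output n m Us y (f x)"
    using success_prob_le[OF x, of f m Us] success_prob_le[OF y, of f m Us] unfolding bias_def by simp
  also have "\<dots> \<le> 2 * vec_dist ?d (final_state n m Us x) (final_state n m Us y)"
    unfolding prob_output_eq using fin[of x] fin[of y] by (intro sq_norm_restrict_diff_le) auto
  also have "vec_dist ?d (final_state n m Us x) (final_state n m Us y)
      \<le> vec_dist ?d ?v ?v + 2 * (\<Sum>t<length Us'. query_mag n ?d i (foldl (alg_step n m y) ?v (take t Us')))"
    unfolding Us final_state_Cons by (rule hybrid_bound[OF n xy Vs v v])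
  finally show ?thesis by (simp add: vec_dist_def L2_set_def)
qed

lemma sensitivity_bias_bound:
  assumes n: "0 < n" and va: "valid_alg n m Us" and y: "y \<in> inputs n"
    and S: "S \<subseteq> {..<n}" and sens: "\<And>i. i \<in> S \<Longrightarrow> f (y[i := \<not> y ! i]) \<noteq> f y"
  shows "sqrt (card S) * bias n f m Us \<le> 2 * real (num_queries Us)"
proof -
  let ?d = "qdim n m"
  obtain U Us' where Us: "Us = U # Us'" and Vs: "\<forall>V\<in>set Us'. unitary_of_dim ?d V"
    using va by (rule valid_alg_ConsE)
  define w where "w t = foldl (alg_step n m y) (U *\<^sub>v unit_vec ?d 0) (take t Us')" for t
  note U0 = initial_state_carrier_sq_norm[OF n va[unfolded Us]]
  have w: "w t \<in> carrier_vec ?d \<and> sq_norm (w t) = 1" for t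
    unfolding w_def using foldl_alg_step_carrier_sq_norm[OF n _ U0(1)] Vs U0(2)
    by (auto dest: in_set_takeD)
  have T: "num_queries Us = length Us'" unfolding num_queries_def Us by simp
  have each: "bias n f m Us \<le> 2 * (\<Sum>t<length Us'. query_mag n ?d i (w t))" if i: "i \<in> S" for i
    unfolding w_def
  proof (rule bias_le_query_mag[OF n va Us _ y])
    show "y[i := \<not> y ! i] \<in> inputs n" using y unfolding inputs_def by simp
    show "f (y[i := \<not> y ! i]) \<noteq> f y" by (rule sens[OF i])
  qed simp
  have "real (card S) * bias n f m Us = (\<Sum>i\<in>S. bias n f m Us)" by simp
  also have "\<dots> \<le> (\<Sum>i\<in>S. 2 * (\<Sum>t<length Us'. query_mag n ?d i (w t)))"
    by (rule sum_mono) (rule each)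
  also have "\<dots> = 2 * (\<Sum>t<length Us'. \<Sum>i\<in>S. query_mag n ?d i (w t))"
    by (simp add: sum_distrib_left sum.swap[of _ S])
  also have "\<dots> \<le> 2 * (\<Sum>t<length Us'. sqrt (card S))"
    using sum_query_mag_le[OF finite_subset[OF S] w[THEN conjunct1]] w
    by (intro mult_left_mono sum_mono) auto
  also have "\<dots> = sqrt (card S) * (2 * real (num_queries Us))" unfolding T by simp
  finally have "sqrt (card S) * (sqrt (card S) * bias n f m Us) \<le> sqrt (card S) * (2 * real (num_queries Us))"
    by (simp add: mult.assoc[symmetric])
  then show ?thesis by (cases "card S = 0") (auto simp: mult_le_cancel_left)
qed

section \<open>Sensitivity of nonconstant symmetric functions\<close>

lemma hamming_weight_list_update:
  "i < length xs \<Longrightarrow> hamming_weight (xs[i := b]) + of_bool (xs ! i) = hamming_weight xs + of_bool b"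
proof (induction xs arbitrary: i)
  case (Cons a xs)
  show ?case
  proof (cases i)
    case (Suc j)
    then show ?thesis using Cons.IH[of j] Cons.prems
      by (cases b; cases "xs ! j") (simp_all add: hamming_weight_def)
  qed (simp add: hamming_weight_def)
qed simp

definition weight_input :: "nat \<Rightarrow> nat \<Rightarrow> bool list" where
  "weight_input n k = replicate k True @ replicate (n - k) False"

lemma weight_input_inputs: "k \<le> n \<Longrightarrow> weight_input n k \<in> inputs n"
  unfolding weight_input_def inputs_def by simp

lemma hamming_weight_weight_input: "k \<le> n \<Longrightarrow> hamming_weight (weight_input n k) = k"
  unfolding weight_input_def hamming_weight_def by simp

lemma weight_input_nth: "i < n \<Longrightarrow> weight_input n k ! i = (i < k)"
  unfolding weight_input_def by (simp add: nth_append)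

lemma hamming_weight_le: "x \<in> inputs n \<Longrightarrow> hamming_weight x \<le> n"
  unfolding inputs_def hamming_weight_def by (auto intro: order_trans[OF length_filter_le])

lemma symmetric_fun_weight_input:
  assumes "symmetric_fun n f" and "x \<in> inputs n"
  shows "f x = f (weight_input n (hamming_weight x))"
  using assms hamming_weight_le[OF assms(2)] weight_input_inputs hamming_weight_weight_input
  unfolding symmetric_fun_def by metis

lemma flip_weight_input:
  assumes "k \<le> n" and "i < n"
  shows "(weight_input n k)[i := \<not> weight_input n k ! i] \<in> inputs n"
    and "hamming_weight ((weight_input n k)[i := \<not> weight_input n k ! i]) = (if i < k then k - 1 else k + 1)"
proof -
  show "(weight_input n k)[i := \<not> weight_input n k ! i] \<in> inputs n"
    using weight_input_inputs[OF assms(1)] unfolding inputs_def by simp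
  have "i < length (weight_input n k)" using assms unfolding weight_input_def by simp
  from hamming_weight_list_update[OF this, of "\<not> weight_input n k ! i"]
  show "hamming_weight ((weight_input n k)[i := \<not> weight_input n k ! i]) = (if i < k then k - 1 else k + 1)"
    unfolding weight_input_nth[OF assms(2)] hamming_weight_weight_input[OF assms(1)]
    by (cases "i < k") simp_all
qed

lemma symmetric_nonconstant_threshold:
  assumes sym: "symmetric_fun n f" and nc: "nonconstant_fun n f"
  obtains k where "k < n" and "f (weight_input n k) \<noteq> f (weight_input n (Suc k))"
proof -
  have "\<exists>k<n. f (weight_input n k) \<noteq> f (weight_input n (Suc k))"
  proof (rule ccontr)
    assume "\<not> ?thesis"
    then have "a \<le> n \<Longrightarrow> f (weight_input n a) = f (weight_input n 0)" for a
      by (induction a) auto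
    moreover obtain x y where "x \<in> inputs n" "y \<in> inputs n" "f x \<noteq> f y"
      using nc unfolding nonconstant_fun_def by auto
    ultimately show False
      using symmetric_fun_weight_input[OF sym] hamming_weight_le by metis
  qed
  then show ?thesis using that by blast
qed

text \<open>At a threshold \<open>k\<close> either the \<open>n - k\<close> zero bits of the weight-\<open>k\<close> input or the \<open>k + 1\<close>
  one bits of the weight-\<open>(k + 1)\<close> input are all sensitive; one of these sets has at least
  \<open>n / 2\<close> elements.\<close>

lemma symmetric_nonconstant_sensitive:
  assumes sym: "symmetric_fun n f" and nc: "nonconstant_fun n f"
  obtains y S where "y \<in> inputs n" and "S \<subseteq> {..<n}" and "n \<le> 2 * card S"
    and "\<And>i. i \<in> S \<Longrightarrow> f (y[i := \<not> y ! i]) \<noteq> f y"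
proof -
  obtain k where k: "k < n" and fk: "f (weight_input n k) \<noteq> f (weight_input n (Suc k))"
    using symmetric_nonconstant_threshold[OF sym nc] by blast
  have flip: "f ((weight_input n j)[i := \<not> weight_input n j ! i])
      = f (weight_input n (if i < j then j - 1 else j + 1))" if "j \<le> n" "i < n" for i j
    using symmetric_fun_weight_input[OF sym flip_weight_input(1)[OF that]] flip_weight_input(2)[OF that]
    by simp
  show ?thesis
  proof (cases "k + 1 \<le> n - k")
    case True
    have "f ((weight_input n k)[i := \<not> weight_input n k ! i]) \<noteq> f (weight_input n k)"
      if "i \<in> {k..<n}" for i
      using flip[of k i] that k fk by simp
    then show ?thesis
      by (intro that[of "weight_input n k" "{k..<n}"]) (use True k weight_input_inputs in auto)
  next
    case False
    have "f ((weight_input n (Suc k))[i := \<not> weight_input n (Suc k) ! i]) \<noteq> f (weight_input n (Suc k))"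
      if "i \<in> {..<Suc k}" for i
      using flip[of "Suc k" i] that k fk by simp
    then show ?thesis
      by (intro that[of "weight_input n (Suc k)" "{..<Suc k}"]) (use False k weight_input_inputs in auto)
  qed
qed

lemma cost_lower_bound_arith:
  fixes N T :: nat and b :: real
  assumes b: "0 < b" and n: "1 \<le> n" and nN: "real n \<le> 2 * real N"
    and bT: "sqrt N * b \<le> 2 * real T"
  shows "(1/2) * log 2 (real n) - 3 \<le> real T + log 2 (1 / (2 * b))"
proof -
  have N: "0 < N" using n nN by simp
  then have "0 < sqrt N * b" using b by simp
  then have T: "0 < T" using bT by (cases T) auto
  have "log 2 (sqrt N / (4 * real T)) \<le> log 2 (1 / (2 * b))"
    using bT b T N by (intro log_mono) (simp_all add: field_simps)
  moreover have "log 2 (sqrt N / (4 * real T)) = (1/2) * log 2 N - 2 - log 2 T"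
    using N T log_pow_cancel[of 2 2] by (simp add: log_divide log_mult sqrt_def log_root)
  moreover have "log 2 n \<le> 1 + log 2 N"
    using log_mono[of 2 n "2 * N"] nN n N by (simp add: log_mult)
  moreover have "log 2 T < T" using log2_of_power_less[OF less_exp T] .
  ultimately show ?thesis by linarith
qed

lemma wu_cost_lower_bound:
  assumes n: "1 \<le> n" and sym: "symmetric_fun n f" and nc: "nonconstant_fun n f"
    and va: "valid_alg n m Us" and b: "0 < bias n f m Us"
  shows "(1/2) * log 2 (real n) - 3 \<le> wu_cost n f m Us"
proof -
  obtain y S where "y \<in> inputs n" and S: "S \<subseteq> {..<n}" and "n \<le> 2 * card S"
    and "\<And>i. i \<in> S \<Longrightarrow> f (y[i := \<not> y ! i]) \<noteq> f y"
    using symmetric_nonconstant_sensitive[OF sym nc] by blast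
  with n va have "sqrt (card S) * bias n f m Us \<le> 2 * real (num_queries Us)"
    by (intro sensitivity_bias_bound) auto
  then show ?thesis
    unfolding wu_cost_def using cost_lower_bound_arith[OF b n, of "card S" "num_queries Us"] \<open>n \<le> 2 * card S\<close>
    by simp
qed

section \<open>An exact algorithm for symmetric functions\<close>

definition basis_coords :: "nat \<Rightarrow> nat \<Rightarrow> nat \<times> nat \<times> nat" where
  "basis_coords n c = (c mod n, c div n mod 2, c div (2 * n))"

definition basis_box :: "nat \<Rightarrow> nat \<Rightarrow> (nat \<times> nat \<times> nat) set" where
  "basis_box n m = {..<n} \<times> {..<2} \<times> {..<m}"

definition lift_perm :: "nat \<Rightarrow> (nat \<times> nat \<times> nat \<Rightarrow> nat \<times> nat \<times> nat) \<Rightarrow> nat \<Rightarrow> nat" where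
  "lift_perm n \<phi> c = (case \<phi> (basis_coords n c) of (i, b, z) \<Rightarrow> basis_index n i b z)"

lemma basis_coords_in_box: "0 < n \<Longrightarrow> c < qdim n m \<Longrightarrow> basis_coords n c \<in> basis_box n m"
  unfolding basis_coords_def basis_box_def using workspace_less by auto

lemma basis_coords_basis_index:
  "(i, b, z) \<in> basis_box n m \<Longrightarrow> basis_coords n (basis_index n i b z) = (i, b, z)"
  unfolding basis_box_def basis_coords_def by (simp add: basis_index_coords)

lemma basis_index_less_qdim_box:
  "(i, b, z) \<in> basis_box n m \<Longrightarrow> basis_index n i b z < qdim n m"
  unfolding basis_box_def by (simp add: basis_index_less_qdim)

lemma lift_perm_basis_index:
  assumes "(i, b, z) \<in> basis_box n m" and "\<phi> (i, b, z) = (i', b', z')"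
  shows "lift_perm n \<phi> (basis_index n i b z) = basis_index n i' b' z'"
  using assms unfolding lift_perm_def by (simp add: basis_coords_basis_index)

lemma lift_perm_bij:
  assumes n: "0 < n" and into: "\<And>t. t \<in> basis_box n m \<Longrightarrow> \<phi> t \<in> basis_box n m"
    and inj: "inj_on \<phi> (basis_box n m)"
  shows "bij_betw (lift_perm n \<phi>) {..<qdim n m} {..<qdim n m}"
proof -
  have lift_less: "lift_perm n \<phi> c < qdim n m" if "c < qdim n m" for c
    using into[OF basis_coords_in_box[OF n that]] basis_index_less_qdim_box
    unfolding lift_perm_def by (auto split: prod.split)
  have coords_lift: "basis_coords n (lift_perm n \<phi> c) = \<phi> (basis_coords n c)" if "c < qdim n m" for c
    using into[OF basis_coords_in_box[OF n that]] basis_coords_basis_index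
    unfolding lift_perm_def by (auto split: prod.split)
  have "inj_on (lift_perm n \<phi>) {..<qdim n m}"
  proof (rule inj_onI)
    fix c c' assume c: "c \<in> {..<qdim n m}" and c': "c' \<in> {..<qdim n m}"
      and eq: "lift_perm n \<phi> c = lift_perm n \<phi> c'"
    then have "\<phi> (basis_coords n c) = \<phi> (basis_coords n c')" using coords_lift by (metis lessThan_iff)
    then have "basis_coords n c = basis_coords n c'"
      using inj basis_coords_in_box[OF n] c c' by (auto dest: inj_onD)
    then show "c = c'" unfolding basis_coords_def by (metis prod.inject basis_index_decomp)
  qed
  moreover have "lift_perm n \<phi> ` {..<qdim n m} \<subseteq> {..<qdim n m}" using lift_less by auto
  ultimately show ?thesis
    unfolding bij_betw_def using endo_inj_surj[of "{..<qdim n m}"] by simp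
qed

definition coord_perm_mat :: "nat \<Rightarrow> nat \<Rightarrow> (nat \<times> nat \<times> nat \<Rightarrow> nat \<times> nat \<times> nat) \<Rightarrow> complex mat" where
  "coord_perm_mat n m \<phi> = perm_mat (qdim n m) (lift_perm n \<phi>)"

lemma unitary_coord_perm_mat:
  assumes "0 < n" and "\<And>t. t \<in> basis_box n m \<Longrightarrow> \<phi> t \<in> basis_box n m" and "inj_on \<phi> (basis_box n m)"
  shows "unitary_of_dim (qdim n m) (coord_perm_mat n m \<phi>)"
  unfolding coord_perm_mat_def by (rule unitary_perm_mat[OF lift_perm_bij[OF assms]])

lemma coord_perm_mat_unit_vec:
  assumes "(i, b, z) \<in> basis_box n m" and "\<phi> (i, b, z) = (i', b', z')" and "(i', b', z') \<in> basis_box n m"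
  shows "coord_perm_mat n m \<phi> *\<^sub>v unit_vec (qdim n m) (basis_index n i b z)
    = unit_vec (qdim n m) (basis_index n i' b' z')"
  unfolding coord_perm_mat_def
  using perm_mat_mult_unit_vec[OF basis_index_less_qdim_box[OF assms(1)]]
    lift_perm_basis_index[where \<phi> = \<phi>, OF assms(1,2)] basis_index_less_qdim_box[OF assms(3)]
  by simp

lemma query_op_unit_vec:
  assumes "(i, b, z) \<in> basis_box n m"
  shows "query_op n m x *\<^sub>v unit_vec (qdim n m) (basis_index n i b z)
    = unit_vec (qdim n m) (basis_index n i (if x ! i then 1 - b else b) z)"
proof -
  have "0 < n" and "(i, if x ! i then 1 - b else b, z) \<in> basis_box n m"
    using assms unfolding basis_box_def by auto
  then show ?thesis
    unfolding query_op_eq_perm_mat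
    using perm_mat_mult_unit_vec[OF basis_index_less_qdim_box[OF assms]] assms
      basis_index_less_qdim_box query_perm_basis_index
    unfolding basis_box_def by auto
qed

text \<open>The reduction \<open>mod m\<close> only serves to make \<open>count_bit m\<close> a permutation; with workspace
  \<open>n + 1\<close> the counter of at most \<open>n\<close> ones never wraps around.\<close>

definition count_bit :: "nat \<Rightarrow> nat \<times> nat \<times> nat \<Rightarrow> nat \<times> nat \<times> nat" where
  "count_bit m = (\<lambda>(i, b, z). (i, b, (z + b) mod m))"

definition next_query :: "nat \<Rightarrow> nat \<times> nat \<times> nat \<Rightarrow> nat \<times> nat \<times> nat" where
  "next_query n = (\<lambda>(i, b, z). (Suc i mod n, b, z))"

definition write_output :: "(nat \<Rightarrow> bool) \<Rightarrow> nat \<times> nat \<times> nat \<Rightarrow> nat \<times> nat \<times> nat" where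
  "write_output g = (\<lambda>(i, b, z). (i, if g z then 1 - b else b, z))"

lemma add_bit_mod_inj:
  assumes "(z1::nat) < m" and "z2 < m" and "b \<le> 1" and "(z1 + b) mod m = (z2 + b) mod m"
  shows "z1 = z2"
proof -
  have "z1 + b < m \<or> z1 + b = m" and "z2 + b < m \<or> z2 + b = m" using assms by auto
  then show ?thesis using assms by (auto split: if_splits)
qed

lemma count_bit_perm:
  assumes "0 < m"
  shows "\<And>t. t \<in> basis_box n m \<Longrightarrow> count_bit m t \<in> basis_box n m"
    and "inj_on (count_bit m) (basis_box n m)"
proof -
  show "\<And>t. t \<in> basis_box n m \<Longrightarrow> count_bit m t \<in> basis_box n m"
    using assms unfolding basis_box_def count_bit_def by auto
  show "inj_on (count_bit m) (basis_box n m)"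
  proof (rule inj_onI)
    fix s t assume "s \<in> basis_box n m" "t \<in> basis_box n m" "count_bit m s = count_bit m t"
    moreover obtain i b z i' b' z' where "s = (i, b, z)" "t = (i', b', z')" by (cases s, cases t)
    ultimately show "s = t"
      using add_bit_mod_inj[of z m z' b] unfolding basis_box_def count_bit_def by auto
  qed
qed

lemma next_query_perm:
  assumes "0 < n"
  shows "\<And>t. t \<in> basis_box n m \<Longrightarrow> next_query n t \<in> basis_box n m"
    and "inj_on (next_query n) (basis_box n m)"
proof -
  show "\<And>t. t \<in> basis_box n m \<Longrightarrow> next_query n t \<in> basis_box n m"
    using assms unfolding basis_box_def next_query_def by auto
  show "inj_on (next_query n) (basis_box n m)"
  proof (rule inj_onI)
    fix s t assume "s \<in> basis_box n m" "t \<in> basis_box n m" "next_query n s = next_query n t"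
    moreover obtain i b z i' b' z' where "s = (i, b, z)" "t = (i', b', z')" by (cases s, cases t)
    ultimately show "s = t"
      using add_bit_mod_inj[of i n i' 1] unfolding basis_box_def next_query_def by simp
  qed
qed

lemma write_output_perm:
  shows "\<And>t. t \<in> basis_box n m \<Longrightarrow> write_output g t \<in> basis_box n m"
    and "inj_on (write_output g) (basis_box n m)"
proof -
  show "\<And>t. t \<in> basis_box n m \<Longrightarrow> write_output g t \<in> basis_box n m"
    unfolding basis_box_def write_output_def by auto
  show "inj_on (write_output g) (basis_box n m)"
  proof (rule inj_onI)
    fix s t assume "s \<in> basis_box n m" "t \<in> basis_box n m" "write_output g s = write_output g t"
    moreover obtain i b z i' b' z' where "s = (i, b, z)" "t = (i', b', z')" by (cases s, cases t)
    ultimately show "s = t" unfolding basis_box_def write_output_def by (auto split: if_splits)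
  qed
qed

text \<open>Round \<open>k\<close> queries \<open>x\<^sub>k\<close> into the answer bit, adds it to the counter \<open>z\<close> and erases it
  again by a second query; it then moves to index \<open>k + 1\<close>, except in the last round, which
  instead writes \<open>g z\<close> into the answer bit.\<close>

definition counting_round :: "nat \<Rightarrow> (nat \<Rightarrow> bool) \<Rightarrow> nat \<Rightarrow> complex mat list" where
  "counting_round n g k =
     [coord_perm_mat n (n + 1) (count_bit (n + 1)),
      coord_perm_mat n (n + 1) (if Suc k = n then write_output g else next_query n)]"

definition counting_alg :: "nat \<Rightarrow> (nat \<Rightarrow> bool) \<Rightarrow> complex mat list" where
  "counting_alg n g = perm_mat (qdim n (n + 1)) id # concat (map (counting_round n g) [0..<n])"

lemma hamming_weight_take_Suc:
  "k < length x \<Longrightarrow> hamming_weight (take (Suc k) x) = hamming_weight (take k x) + of_bool (x ! k)"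
  unfolding hamming_weight_def by (simp add: take_Suc_conv_app_nth)

lemma hamming_weight_take_le: "hamming_weight (take k x) \<le> k"
  unfolding hamming_weight_def by (metis length_filter_le length_take min.bounded_iff)

lemma counting_round_step:
  assumes k: "k < n" and z: "z + 1 \<le> n"
  shows "foldl (alg_step n (n + 1) x) (unit_vec (qdim n (n + 1)) (basis_index n k 0 z))
      [coord_perm_mat n (n + 1) (count_bit (n + 1)), V]
    = V *\<^sub>v unit_vec (qdim n (n + 1)) (basis_index n k 0 (z + of_bool (x ! k)))"
proof -
  let ?d = "qdim n (n + 1)" and ?b = "of_bool (x ! k) :: nat"
  have box: "(k, b, z') \<in> basis_box n (n + 1)" if "b < 2" "z' \<le> n" for b z'
    using that k unfolding basis_box_def by auto
  have "query_op n (n + 1) x *\<^sub>v unit_vec ?d (basis_index n k 0 z) = unit_vec ?d (basis_index n k ?b z)"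
    using query_op_unit_vec[OF box, of 0 z x] z by simp
  moreover have "coord_perm_mat n (n + 1) (count_bit (n + 1)) *\<^sub>v unit_vec ?d (basis_index n k ?b z)
      = unit_vec ?d (basis_index n k ?b (z + ?b))"
    using z by (intro coord_perm_mat_unit_vec box) (auto simp: count_bit_def)
  moreover have "query_op n (n + 1) x *\<^sub>v unit_vec ?d (basis_index n k ?b (z + ?b))
      = unit_vec ?d (basis_index n k 0 (z + ?b))"
    using query_op_unit_vec[OF box, of ?b "z + ?b" x] z by simp
  ultimately show ?thesis by (simp add: alg_step_def)
qed

lemma counting_alg_prefix:
  assumes "k < n" and x: "length x = n"
  shows "foldl (alg_step n (n + 1) x) (unit_vec (qdim n (n + 1)) 0) (concat (map (counting_round n g) [0..<k]))
    = unit_vec (qdim n (n + 1)) (basis_index n k 0 (hamming_weight (take k x)))"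
  using assms(1)
proof (induction k)
  case 0
  then show ?case by (simp add: basis_index_def hamming_weight_def)
next
  case (Suc k)
  let ?d = "qdim n (n + 1)" and ?c = "hamming_weight (take k x)" and ?b = "of_bool (x ! k)"
  let ?A = "coord_perm_mat n (n + 1) (count_bit (n + 1))" and ?B = "coord_perm_mat n (n + 1) (next_query n)"
  have c: "?c + 1 \<le> n" using hamming_weight_take_le[of k x] Suc.prems by simp
  have "concat (map (counting_round n g) [0..<Suc k]) = concat (map (counting_round n g) [0..<k]) @ [?A, ?B]"
    using Suc.prems by (simp add: counting_round_def)
  then have "foldl (alg_step n (n + 1) x) (unit_vec ?d 0) (concat (map (counting_round n g) [0..<Suc k]))
      = foldl (alg_step n (n + 1) x) (unit_vec ?d (basis_index n k 0 ?c)) [?A, ?B]"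
    using Suc by simp
  also have "\<dots> = ?B *\<^sub>v unit_vec ?d (basis_index n k 0 (?c + ?b))"
    using Suc.prems c by (intro counting_round_step) simp_all
  also have "\<dots> = unit_vec ?d (basis_index n (Suc k) 0 (?c + ?b))"
    using c Suc.prems by (intro coord_perm_mat_unit_vec) (auto simp: basis_box_def next_query_def)
  finally show ?case using Suc.prems x by (simp add: hamming_weight_take_Suc)
qed

lemma counting_alg_final_state:
  assumes n: "0 < n" and x: "length x = n"
  shows "final_state n (n + 1) (counting_alg n g) x
    = unit_vec (qdim n (n + 1)) (basis_index n (n - 1) (of_bool (g (hamming_weight x))) (hamming_weight x))"
proof -
  obtain k where nk: "n = Suc k" using n by (cases n) auto
  let ?d = "qdim n (n + 1)" and ?c = "hamming_weight (take k x)" and ?b = "of_bool (x ! k)"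
  let ?A = "coord_perm_mat n (n + 1) (count_bit (n + 1))" and ?X = "coord_perm_mat n (n + 1) (write_output g)"
  have c: "?c + 1 \<le> n" using hamming_weight_take_le[of k x] nk by simp
  have hw: "hamming_weight x = ?c + ?b"
    using hamming_weight_take_Suc[of k x] x nk by simp
  have "perm_mat ?d id *\<^sub>v unit_vec ?d 0 = unit_vec ?d 0"
    using perm_mat_mult_unit_vec[of 0 ?d id] n by (simp add: qdim_def)
  then have "final_state n (n + 1) (counting_alg n g) x
      = foldl (alg_step n (n + 1) x) (unit_vec ?d (basis_index n k 0 ?c)) [?A, ?X]"
    unfolding counting_alg_def final_state_Cons nk
    using counting_alg_prefix[of k "Suc k" x g] x nk by (simp add: counting_round_def)
  also have "\<dots> = ?X *\<^sub>v unit_vec ?d (basis_index n k 0 (?c + ?b))"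
    using nk c by (intro counting_round_step) simp_all
  also have "\<dots> = unit_vec ?d (basis_index n k (of_bool (g (?c + ?b))) (?c + ?b))"
    using c nk by (intro coord_perm_mat_unit_vec) (auto simp: basis_box_def write_output_def)
  finally show ?thesis using hw nk by simp
qed

lemma counting_alg_valid:
  assumes n: "0 < n"
  shows "valid_alg n (n + 1) (counting_alg n g)"
proof -
  have "unitary_of_dim (qdim n (n + 1)) (coord_perm_mat n (n + 1) \<phi>)"
    if "\<phi> \<in> {count_bit (n + 1), next_query n, write_output g}" for \<phi>
    using that count_bit_perm[where m = "n + 1" and n = n] next_query_perm[OF n, where m = "n + 1"]
      write_output_perm[where n = n and m = "n + 1" and g = g]
    by (auto intro: unitary_coord_perm_mat[OF n])
  moreover have "unitary_of_dim (qdim n (n + 1)) (perm_mat (qdim n (n + 1)) id)"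
    by (rule unitary_perm_mat) simp
  ultimately show ?thesis unfolding valid_alg_def counting_alg_def counting_round_def by auto
qed

lemma counting_alg_success_prob:
  assumes n: "0 < n" and sym: "symmetric_fun n f"
  shows "success_prob n f (n + 1) (counting_alg n (\<lambda>k. f (weight_input n k))) = 1"
proof -
  let ?g = "\<lambda>k. f (weight_input n k)" and ?d = "qdim n (n + 1)"
  have "prob_output n (n + 1) (counting_alg n ?g) x (f x) = 1" if x: "x \<in> inputs n" for x
  proof -
    let ?c = "hamming_weight x"
    let ?j = "basis_index n (n - 1) (of_bool (f x)) ?c"
    have "?c \<le> n" using hamming_weight_le[OF x] .
    then have j: "?j < ?d" and out: "?j div n mod 2 = of_bool (f x)"
      using n basis_index_less_qdim[of "n - 1" n] basis_index_coords(2)[of "n - 1" n] by auto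
    have lx: "length x = n" using x unfolding inputs_def by simp
    have fx: "f (weight_input n ?c) = f x" using symmetric_fun_weight_input[OF sym x] by simp
    have "prob_output n (n + 1) (counting_alg n ?g) x (f x) = (\<Sum>r<?d. if r = ?j then 1 else 0)"
      using out unfolding prob_output_def counting_alg_final_state[OF n lx] fx
      by (intro sum.cong) (auto simp: unit_vec_def)
    also have "\<dots> = 1" using j by simp
    finally show ?thesis .
  qed
  moreover have "inputs n \<noteq> {}" using weight_input_inputs[of 0 n] by auto
  ultimately show ?thesis unfolding success_prob_def by (simp add: image_constant_conv cong: image_cong)
qed

theorem mainTheorem11:
  shows "\<exists>C::real. \<forall>n::nat. \<forall>f :: bool list \<Rightarrow> bool.
           n \<ge> 1 \<longrightarrow> symmetric_fun n f \<longrightarrow> nonconstant_fun n f \<longrightarrow>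
           WUQ n f \<ge> (1/2) * log 2 (real n) - C"
proof (intro exI[of _ 3] allI impI)
  fix n :: nat and f :: "bool list \<Rightarrow> bool"
  assume n: "n \<ge> 1" and sym: "symmetric_fun n f" and nc: "nonconstant_fun n f"
  let ?g = "\<lambda>k. f (weight_input n k)"
  have "bias n f (n + 1) (counting_alg n ?g) > 0"
    using counting_alg_success_prob[OF _ sym] n unfolding bias_def by simp
  then have "{wu_cost n f m Us | m Us. valid_alg n m Us \<and> bias n f m Us > 0} \<noteq> {}"
    using counting_alg_valid[of n ?g] n by auto
  then show "(1/2) * log 2 (real n) - 3 \<le> WUQ n f"
    unfolding WUQ_def using wu_cost_lower_bound[OF n sym nc] by (auto intro: cInf_greatest)
qed

end
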